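(* For every prime $p$, $\widetilde{\mathbb{Q}_p}=\mathbb{Q}_p^{\mathrm{alg}}$, where $\mathbb{Q}_p^{\mathrm{alg}}=\{x\in\mathbb{Q}_p: x\text{ is algebraic over }\mathbb{Q}\}$.
   Context: Let $K$ be a field. For $r\in K$, a finite set $A(r)$ with $\{r\}\subseteq A(r)\subseteq K$ is called adequate for $r$ if every mapping $f:A(r)\to K$ satisfying (1) if $1\in A(r)$ then $f(1)=1$; (2) if $a,b\in A(r)$ and $a+b\in A(r)$ then $f(a+b)=f(a)+f(b)$; (3) if $a,b\in A(r)$ and $a\cdot b\in A(r)$ then $f(a\cdot b)=f(a)\cdot f(b)$, also satisfies $f(r)=r$. $\widetilde{K}$ denotes the set of all $r\in K$ for which some finite set adequate for $r$ exists. $\mathbb{Q}_p$ is the field of $p$-adic numbers. *)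

theory Defs
  imports Complex_Main "HOL-Computational_Algebra.Computational_Algebra"
begin

definition adequate :: "'a::field set \<Rightarrow> 'a \<Rightarrow> bool" where
  "adequate A r \<longleftrightarrow> finite A \<and> r \<in> A \<and>
     (\<forall>f :: 'a \<Rightarrow> 'a.
        ((1 \<in> A \<longrightarrow> f 1 = 1) \<and>
         (\<forall>a\<in>A. \<forall>b\<in>A. a + b \<in> A \<longrightarrow> f (a + b) = f a + f b) \<and>
         (\<forall>a\<in>A. \<forall>b\<in>A. a * b \<in> A \<longrightarrow> f (a * b) = f a * f b))
        \<longrightarrow> f r = r)"

definition tilde :: "'a::field set" where
  "tilde = {r. \<exists>A. adequate A r}"

definition padic_abs_rat :: "nat \<Rightarrow> rat \<Rightarrow> real" where
  "padic_abs_rat p q =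
     (if q = 0 then 0
      else (let (a, b) = quotient_of q in
            real p powr (- (real (multiplicity (int p) a) - real (multiplicity (int p) b)))))"

text \<open>This characterizes Q_p up to a unique isomorphism of valued fields.\<close>

definition is_Qp :: "nat \<Rightarrow> ('a::field_char_0 \<Rightarrow> real) \<Rightarrow> bool" where
  "is_Qp p av \<longleftrightarrow>
     (\<forall>x. av x \<ge> 0) \<and> (\<forall>x. av x = 0 \<longleftrightarrow> x = 0) \<and>
     (\<forall>x y. av (x * y) = av x * av y) \<and>
     (\<forall>x y. av (x + y) \<le> max (av x) (av y)) \<and>
     (\<forall>q. av (of_rat q) = padic_abs_rat p q) \<and>
     (\<forall>X :: nat \<Rightarrow> 'a.
        (\<forall>e>0. \<exists>N. \<forall>m\<ge>N. \<forall>n\<ge>N. av (X m - X n) < e) \<longrightarrow>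
        (\<exists>L. \<forall>e>0. \<exists>N. \<forall>n\<ge>N. av (X n - L) < e)) \<and>
     (\<forall>x. \<forall>e>0. \<exists>q. av (x - of_rat q) < e)"

end

theory Submission
  imports Defs "HOL-Library.Function_Algebras"
begin

text \<open>If \<open>r\<close> is algebraic, write \<open>r = c + p\<^sup>k z\<close> with \<open>c\<close> rational, \<open>|z| \<le> 1\<close> and \<open>p\<^sup>-\<^sup>k\<close> smaller than
  the distance from \<open>r\<close> to the other roots of an integer polynomial \<open>g\<close> with \<open>g(r) = 0\<close>. Since
  \<open>|z| \<le> 1\<close> holds iff \<open>y\<^sup>2 = y + p z\<^sup>2\<close> has a solution, a finite set containing \<open>r, c, z\<close>, such a
  solution \<open>y\<close>, the Horner evaluation of \<open>g\<close> at \<open>r\<close> and enough integers forces every partial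
  homomorphism \<open>f\<close> to send \<open>r\<close> to a root of \<open>g\<close> with \<open>|f(r) - r| < p\<^sup>-\<^sup>k\<close>, that is, to \<open>r\<close>.

  Conversely, let \<open>r = a\<^sub>0\<close> be transcendental and \<open>A = {a\<^sub>0, \<dots>, a\<^sub>m\<^sub>-\<^sub>1}\<close>. By induction on \<open>k\<close>
  there are points \<open>b\<close> arbitrarily close to \<open>a\<close> with \<open>b\<^sub>0 \<noteq> a\<^sub>0\<close> that satisfy every integer polynomial
  relation among \<open>a\<^sub>0, \<dots>, a\<^sub>k\<^sub>-\<^sub>1\<close>: if \<open>a\<^sub>k\<close> is algebraic over \<open>\<int>[a\<^sub>0, \<dots>, a\<^sub>k\<^sub>-\<^sub>1]\<close>, it is a simple
  root of a relation of minimal degree, whose coefficients depend continuously on \<open>b\<close>, so Hensel's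
  lemma provides a nearby root to serve as \<open>b\<^sub>k\<close>. For \<open>k = m\<close>, the map \<open>a\<^sub>i \<mapsto> b\<^sub>i\<close> respects the
  operations within \<open>A\<close> but moves \<open>r\<close>.\<close>

section \<open>Ultrametric absolute values\<close>

locale ultrametric_abs =
  fixes av :: "'a::field \<Rightarrow> real"
  assumes av_nonneg: "av x \<ge> 0"
    and av_eq_0_iff: "av x = 0 \<longleftrightarrow> x = 0"
    and av_mult: "av (x * y) = av x * av y"
    and av_add: "av (x + y) \<le> max (av x) (av y)"
begin

lemma av_0 [simp]: "av 0 = 0"
  by (simp add: av_eq_0_iff)

lemma av_pos: "x \<noteq> 0 \<Longrightarrow> av x > 0"
  using av_eq_0_iff av_nonneg by (metis less_eq_real_def)

lemma av_1 [simp]: "av 1 = 1"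
  using av_mult[of 1 1] av_pos[of 1] by simp

lemma av_minus [simp]: "av (- x) = av x"
proof -
  have "av (-1) * av (-1) = 1"
    using av_mult[of "-1" "-1"] by simp
  then have "av (-1) = 1"
    using av_nonneg[of "-1"] square_eq_1_iff[of "av (-1)"] by linarith
  then show ?thesis
    using av_mult[of "-1" x] by simp
qed

lemma av_minus_commute: "av (x - y) = av (y - x)"
  by (metis av_minus minus_diff_eq)

lemma av_power: "av (x ^ n) = av x ^ n"
  by (induction n) (simp_all add: av_mult)

lemma av_divide: "av (x / y) = av x / av y"
proof (cases "y = 0")
  case False
  then have "av (x / y) * av y = av x"
    using av_mult[of "x / y" y] by simp
  then show ?thesis
    using av_pos[OF False] by (simp add: field_simps)
qed simp

lemma av_add_le: "av x \<le> B \<Longrightarrow> av y \<le> B \<Longrightarrow> av (x + y) \<le> B"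
  using av_add[of x y] by simp

lemma av_add_less: "av x < B \<Longrightarrow> av y < B \<Longrightarrow> av (x + y) < B"
  using av_add[of x y] by simp

lemma av_diff_le: "av x \<le> B \<Longrightarrow> av y \<le> B \<Longrightarrow> av (x - y) \<le> B"
  using av_add_le[of x B "- y"] by simp

lemma av_add_eq_of_less: "av x < av y \<Longrightarrow> av (x + y) = av y"
proof -
  assume less: "av x < av y"
  have "av y \<le> max (av (x + y)) (av x)"
    using av_add[of "x + y" "- x"] by simp
  with less have "av y \<le> av (x + y)"
    by linarith
  then show ?thesis
    using av_add[of x y] less by simp
qed

lemma av_sum_le: "(\<And>i. i \<in> S \<Longrightarrow> av (f i) \<le> B) \<Longrightarrow> B \<ge> 0 \<Longrightarrow> av (sum f S) \<le> B"
  by (induction S rule: infinite_finite_induct) (simp_all add: av_add_le)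

lemma av_power_diff_le:
  assumes "av t \<le> \<rho>" "av u \<le> \<rho>" "j \<ge> 1"
  shows "av (t ^ j - u ^ j) \<le> av (t - u) * \<rho> ^ (j - 1)"
  using assms(3)
proof (induction j rule: dec_induct)
  case (step j)
  have \<rho>: "\<rho> \<ge> 0"
    using assms(1) av_nonneg order_trans by blast
  have "av (t * (t ^ j - u ^ j)) \<le> \<rho> * (av (t - u) * \<rho> ^ (j - 1))"
    unfolding av_mult using step.IH assms(1) av_nonneg \<rho> by (intro mult_mono) auto
  also have "\<dots> = av (t - u) * \<rho> ^ j"
    using step.hyps by (cases j) simp_all
  finally have t_part: "av (t * (t ^ j - u ^ j)) \<le> av (t - u) * \<rho> ^ j" .
  have u_part: "av ((t - u) * u ^ j) \<le> av (t - u) * \<rho> ^ j"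
    unfolding av_mult av_power using assms(2) av_nonneg by (intro mult_left_mono power_mono) auto
  have "t ^ Suc j - u ^ Suc j = t * (t ^ j - u ^ j) + (t - u) * u ^ j"
    by (simp add: algebra_simps)
  then show ?case
    using av_add_le[OF t_part u_part] by simp
qed simp

lemma av_poly_diff_le:
  fixes r :: "'a poly"
  assumes "coeff r 0 = 0" "coeff r 1 = 0" "\<And>j. av (coeff r j) \<le> M"
    and "av t \<le> \<rho>" "av u \<le> \<rho>" "\<rho> \<le> 1"
  shows "av (poly r t - poly r u) \<le> av (t - u) * \<rho> * M"
proof -
  have \<rho>: "\<rho> \<ge> 0" and M: "M \<ge> 0"
    using assms(3-4) av_nonneg order_trans by blast+
  have "av (coeff r i * (t ^ i - u ^ i)) \<le> av (t - u) * \<rho> * M" for i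
  proof (cases "i \<le> 1")
    case True
    then have "coeff r i = 0"
      using assms(1,2) by (cases i) auto
    then show ?thesis
      using \<rho> M av_nonneg by simp
  next
    case False
    have "av (t ^ i - u ^ i) \<le> av (t - u) * \<rho> ^ (i - 1)"
      using False assms by (intro av_power_diff_le) auto
    also have "\<dots> \<le> av (t - u) * \<rho>"
      using False \<rho> assms(6) av_nonneg power_decreasing[of 1 "i - 1" \<rho>] by (intro mult_left_mono) auto
    finally show ?thesis
      unfolding av_mult using assms(3)[of i] av_nonneg M by (simp add: mult_mono' algebra_simps)
  qed
  moreover have "poly r t - poly r u = (\<Sum>i\<le>degree r. coeff r i * (t ^ i - u ^ i))"
    by (simp add: poly_altdef sum_subtractf[symmetric] right_diff_distrib)
  ultimately show ?thesis
    using \<rho> M av_nonneg by (simp add: av_sum_le)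
qed

lemma av_coeff_pcompose_le:
  fixes P :: "'a poly"
  assumes "\<And>j. av (coeff P j) \<le> B"
  shows "av (coeff (pcompose P [:y, 1:]) j) \<le> B * max 1 (av y) ^ degree P"
  using assms
proof (induction P arbitrary: j rule: pCons_induct)
  case (pCons a P)
  define m where "m = max 1 (av y)"
  have m: "m \<ge> 1" and B: "B \<ge> 0" and a: "av a \<le> B"
    using pCons.prems[of 0] av_nonneg[of a] by (auto simp: m_def)
  show ?case
  proof (cases "P = 0")
    case True
    then show ?thesis
      using a B by (cases j) auto
  next
    case False
    define S where "S = pcompose P [:y, 1:]"
    have S: "av (coeff S i) \<le> B * m ^ degree P" for i
      unfolding S_def m_def using pCons.prems by (intro pCons.IH) (metis coeff_pCons_Suc)
    have mono: "B * m ^ degree P \<le> B * m ^ Suc (degree P)" "B \<le> B * m ^ Suc (degree P)"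
      using m B by (simp add: mult_left_mono power_increasing)
        (metis B m mult_left_mono mult.right_neutral one_le_power)
    have const: "av (coeff [:a:] j) \<le> B * m ^ Suc (degree P)"
      using a B mono by (cases j) auto
    have scaled: "av (coeff (smult y S) j) \<le> B * m ^ Suc (degree P)"
    proof -
      have "av y * av (coeff S j) \<le> m * (B * m ^ degree P)"
        using S[of j] av_nonneg by (intro mult_mono) (auto simp: m_def)
      then show ?thesis
        by (simp add: av_mult algebra_simps)
    qed
    have shifted: "av (coeff (pCons 0 S) j) \<le> B * m ^ Suc (degree P)"
      using S mono B by (cases j) (auto intro: order_trans)
    have "pcompose (pCons a P) [:y, 1:] = [:a:] + (smult y S + pCons 0 S)"
      by (simp add: pcompose_pCons S_def)
    moreover have "degree (pCons a P) = Suc (degree P)"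
      using False by simp
    ultimately show ?thesis
      unfolding m_def[symmetric] by (simp only: coeff_add) (intro av_add_le const scaled shifted)
  qed
qed simp

lemma av_mult_diff_less:
  assumes "av (x' - x) < d" "av (y' - y) < d" "d \<le> 1" "d * (1 + av x + av y) \<le> \<delta>"
  shows "av (x' * y' - x * y) < \<delta>"
proof -
  define u v where "u = x' - x" and "v = y' - y"
  have "d > 0"
    using assms(1) av_nonneg order_le_less_trans by blast
  have "av u * av v \<le> av u"
    using assms(2,3) av_nonneg by (simp add: u_def v_def mult_left_le)
  moreover have "d \<le> d * (1 + av x + av y)"
    using \<open>d > 0\<close> av_nonneg by (simp add: algebra_simps add_nonneg_nonneg)
  ultimately have "av (u * v) < \<delta>"
    using assms(1,4) by (simp add: av_mult u_def)
  moreover have "av (u * y) < \<delta>"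
  proof -
    have "av u * av y \<le> d * av y"
      using assms(1) av_nonneg by (simp add: u_def mult_right_mono)
    also have "\<dots> < d * (1 + av x + av y)"
      using mult_strict_left_mono[of "av y" "1 + av x + av y" d] \<open>d > 0\<close> av_nonneg[of x] by simp
    finally show ?thesis
      using assms(4) by (simp add: av_mult)
  qed
  moreover have "av (x * v) < \<delta>"
  proof -
    have "av x * av v \<le> av x * d"
      using assms(2) av_nonneg by (simp add: v_def mult_left_mono)
    also have "\<dots> < (1 + av x + av y) * d"
      using mult_strict_right_mono[of "av x" "1 + av x + av y" d] \<open>d > 0\<close> av_nonneg[of y] by simp
    also have "\<dots> = d * (1 + av x + av y)"
      by (rule mult.commute)
    finally show ?thesis
      using assms(4) by (simp add: av_mult)
  qed
  moreover have "x' * y' - x * y = u * v + u * y + x * v"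
    by (simp add: u_def v_def algebra_simps)
  ultimately show ?thesis
    by (simp add: av_add_less)
qed

lemma Cauchy_if_geometric_steps:
  assumes steps: "\<And>n. av (s (Suc n) - s n) \<le> \<theta> ^ n * \<rho>" and \<theta>: "0 \<le> \<theta>" "\<theta> < 1" and "0 \<le> \<rho>"
  shows "\<forall>e>0. \<exists>N. \<forall>m\<ge>N. \<forall>n\<ge>N. av (s m - s n) < e"
proof (intro allI impI)
  fix e :: real
  assume "e > 0"
  have far: "av (s (n + j) - s n) \<le> \<theta> ^ n * \<rho>" for n j
  proof (induction j)
    case (Suc j)
    have "\<theta> ^ (n + j) * \<rho> \<le> \<theta> ^ n * \<rho>"
      using \<theta> \<open>0 \<le> \<rho>\<close> by (simp add: mult_right_mono power_decreasing)
    then have "av (s (Suc (n + j)) - s (n + j)) \<le> \<theta> ^ n * \<rho>"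
      using steps[of "n + j"] by linarith
    from av_add_le[OF this Suc.IH] show ?case
      by simp
  qed (use \<theta> \<open>0 \<le> \<rho>\<close> in simp)
  have "(\<lambda>n. \<theta> ^ n * \<rho>) \<longlonglongrightarrow> 0"
    using \<theta> by (intro tendsto_mult_left_zero LIMSEQ_realpow_zero)
  then obtain N where N: "\<forall>n\<ge>N. \<theta> ^ n * \<rho> < e"
    using LIMSEQ_D \<open>e > 0\<close> \<theta> \<open>0 \<le> \<rho>\<close> by fastforce
  have "av (s m - s n) < e" if "n \<ge> N" "m \<ge> n" for m n
    using far[of n "m - n"] N that by fastforce
  then show "\<exists>N. \<forall>m\<ge>N. \<forall>n\<ge>N. av (s m - s n) < e"
    by (metis av_minus_commute nle_le)
qed

lemma poly_root_isolated:
  fixes g :: "'a poly"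
  assumes "g \<noteq> 0"
  obtains \<delta> where "\<delta> > 0" "\<And>x. poly g x = 0 \<Longrightarrow> av (x - r) < \<delta> \<Longrightarrow> x = r"
proof -
  define D where "D = (\<lambda>x. av (x - r)) ` {x. poly g x = 0 \<and> x \<noteq> r}"
  have "finite D"
    using poly_roots_finite[OF assms] by (simp add: D_def)
  then have "Min (insert 1 D) > 0"
    by (auto simp: D_def av_pos)
  moreover have "Min (insert 1 D) \<le> av (x - r)" if "poly g x = 0" "x \<noteq> r" for x
    using \<open>finite D\<close> that by (intro Min_le) (auto simp: D_def)
  ultimately show ?thesis
    using that by (meson not_le)
qed

end

section \<open>Hensel's lemma\<close>

locale complete_ultrametric_abs = ultrametric_abs +
  assumes av_Cauchy_convergent: "(\<forall>e>0. \<exists>N. \<forall>m\<ge>N. \<forall>n\<ge>N. av ((X :: nat \<Rightarrow> 'a::field) m - X n) < e) \<Longrightarrow>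
    \<exists>L. \<forall>e>0. \<exists>N. \<forall>n\<ge>N. av (X n - L) < e"
begin

lemma contraction_has_fixpoint:
  assumes maps: "\<And>t. av t \<le> \<rho> \<Longrightarrow> av (T t) \<le> \<rho>"
    and contr: "\<And>t u. av t \<le> \<rho> \<Longrightarrow> av u \<le> \<rho> \<Longrightarrow> av (T t - T u) \<le> \<theta> * av (t - u)"
    and \<theta>: "0 \<le> \<theta>" "\<theta> < 1" and \<rho>: "0 < \<rho>"
  shows "\<exists>t. av t \<le> \<rho> \<and> T t = t"
proof -
  define s where "s n = (T ^^ n) 0" for n
  have s_Suc: "s (Suc n) = T (s n)" for n
    by (simp add: s_def)
  have s_ball: "av (s n) \<le> \<rho>" for n
    by (induction n) (use \<rho> maps in \<open>simp_all add: s_def\<close>)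
  have s_step: "av (s (Suc n) - s n) \<le> \<theta> ^ n * \<rho>" for n
  proof (induction n)
    case (Suc n)
    have "av (s (Suc (Suc n)) - s (Suc n)) \<le> \<theta> * av (s (Suc n) - s n)"
      using contr[OF s_ball s_ball, of "Suc n" n] by (simp only: s_Suc)
    also have "\<dots> \<le> \<theta> * (\<theta> ^ n * \<rho>)"
      using Suc.IH \<theta> by (simp add: mult_left_mono)
    finally show ?case
      by simp
  qed (use maps[of 0] \<rho> in \<open>simp add: s_def\<close>)
  then have "\<forall>e>0. \<exists>N. \<forall>m\<ge>N. \<forall>n\<ge>N. av (s m - s n) < e"
    using \<rho> by (intro Cauchy_if_geometric_steps[OF _ \<theta>]) auto
  then obtain L where L: "\<forall>e>0. \<exists>N. \<forall>n\<ge>N. av (s n - L) < e"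
    using av_Cauchy_convergent[of s] by blast
  have L_ball: "av L \<le> \<rho>"
  proof -
    obtain N where "av (s N - L) < \<rho>"
      using L \<rho> by blast
    then show ?thesis
      using av_diff_le[OF s_ball[of N], of "s N - L"] by simp
  qed
  have "T L = L"
  proof (rule ccontr)
    assume "T L \<noteq> L"
    then obtain N where N: "\<forall>n\<ge>N. av (s n - L) < av (T L - L)"
      using L av_pos[of "T L - L"] by auto
    have "av (T L - T (s N)) \<le> \<theta> * av (L - s N)"
      by (rule contr[OF L_ball s_ball])
    also have "\<dots> \<le> av (L - s N)"
      using \<theta> av_nonneg by (simp add: mult_left_le_one_le)
    also have "\<dots> < av (T L - L)"
      using N av_minus_commute by auto
    finally have "av ((T L - T (s N)) + (s (Suc N) - L)) < av (T L - L)"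
      using N by (intro av_add_less) auto
    then show False
      by (simp add: s_Suc)
  qed
  with L_ball show ?thesis
    by blast
qed

text \<open>Hensel's lemma, proved by Newton's iteration with the slope frozen at \<open>coeff q 1\<close>, which
  contracts the ball of radius \<open>\<rho>\<close>.\<close>

lemma poly_root_near_0:
  fixes q :: "'a poly"
  assumes \<rho>: "0 < \<rho>" "\<rho> \<le> 1" and M: "\<And>j. j \<ge> 2 \<Longrightarrow> av (coeff q j) \<le> M"
    and slope: "M * \<rho> < av (coeff q 1)" and q0: "av (coeff q 0) \<le> \<rho> * av (coeff q 1)"
  shows "\<exists>t. av t \<le> \<rho> \<and> poly q t = 0"
proof -
  define c0 c1 where "c0 = coeff q 0" and "c1 = coeff q 1"
  define r where "r = q - [:c0, c1:]"
  define T where "T t = - ((c0 + poly r t) / c1)" for t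
  define \<theta> where "\<theta> = \<rho> * M / av c1"
  have "M \<ge> 0"
    using M[of 2] av_nonneg order_trans by blast
  then have "M * \<rho> \<ge> 0"
    using \<rho> by simp
  then have C: "av c1 > 0"
    using slope unfolding c1_def by linarith
  then have "c1 \<noteq> 0"
    by auto
  have r_M: "av (coeff r j) \<le> M" for j
    using M[of j] \<open>M \<ge> 0\<close> by (cases "j \<le> 1") (auto simp: r_def c0_def c1_def coeff_pCons split: nat.split)
  have r_Lipschitz: "av (poly r t - poly r u) \<le> av (t - u) * \<rho> * M" if "av t \<le> \<rho>" "av u \<le> \<rho>" for t u
    using r_M \<rho> that by (intro av_poly_diff_le) (simp_all add: r_def c0_def c1_def)
  have "av (T t) \<le> \<rho>" if t: "av t \<le> \<rho>" for t
  proof -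
    have "av (poly r t) \<le> av t * \<rho> * M"
      using r_Lipschitz[OF t, of 0] \<rho> by (simp add: r_def c0_def poly_0_coeff_0)
    also have "\<dots> \<le> \<rho> * (M * \<rho>)"
      using t \<rho> \<open>M \<ge> 0\<close> by (simp add: mult_left_mono algebra_simps)
    also have "\<dots> \<le> \<rho> * av c1"
      using slope \<rho> by (simp add: c1_def)
    finally have "av (c0 + poly r t) \<le> \<rho> * av c1"
      using q0 by (intro av_add_le) (simp_all add: c0_def c1_def)
    then show ?thesis
      using C by (simp only: T_def av_minus av_divide divide_le_eq) simp
  qed
  moreover have "av (T t - T u) \<le> \<theta> * av (t - u)" if "av t \<le> \<rho>" "av u \<le> \<rho>" for t u
  proof -
    have "T t - T u = - (poly r t - poly r u) / c1"
      using \<open>c1 \<noteq> 0\<close> by (simp add: T_def field_simps)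
    then have "av (T t - T u) = av (poly r t - poly r u) / av c1"
      by (simp add: av_divide av_minus_commute)
    also have "\<dots> \<le> av (t - u) * \<rho> * M / av c1"
      using r_Lipschitz[OF that] C by (simp add: divide_right_mono)
    finally show ?thesis
      by (simp add: \<theta>_def mult_ac)
  qed
  moreover have "0 \<le> \<theta>" "\<theta> < 1"
    using \<rho> \<open>M \<ge> 0\<close> C slope by (simp_all add: \<theta>_def c1_def mult.commute)
  ultimately obtain t where "av t \<le> \<rho>" "T t = t"
    using contraction_has_fixpoint \<rho> by blast
  moreover have "poly q t = c1 * (t - T t)"
    using \<open>c1 \<noteq> 0\<close> by (simp add: T_def r_def field_simps)
  ultimately show ?thesis
    by auto
qed

lemma poly_root_near_0_if_coeffs_close:
  fixes g h :: "'a poly"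
  assumes root: "poly h 0 = 0" and B: "\<And>j. av (coeff h j) \<le> B"
    and \<rho>: "0 < \<rho>" "\<rho> \<le> 1" "(B + av (coeff h 1)) * \<rho> < av (coeff h 1)"
    and close: "\<And>j. av (coeff g j - coeff h j) \<le> \<rho> * av (coeff h 1) / 2"
  shows "\<exists>t. av t \<le> \<rho> \<and> poly g t = 0"
proof -
  define C where "C = av (coeff h 1)"
  have "B \<ge> 0"
    using B[of 0] av_nonneg order_trans by blast
  then have "(B + C) * \<rho> \<ge> 0"
    using \<rho> av_nonneg by (simp add: C_def)
  then have "C > 0"
    using \<rho>(3) by (simp add: C_def)
  then have \<delta>: "\<rho> * C / 2 < C" "\<rho> * C / 2 \<le> \<rho> * C" "\<rho> * C \<le> C"
    using \<rho> by (auto simp: mult_left_le_one_le)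
  have split: "coeff g j = (coeff g j - coeff h j) + coeff h j" for j
    by simp
  have "av (coeff g 1 - coeff h 1) < av (coeff h 1)"
    using close[of 1] \<delta> by (simp add: C_def)
  then have "av (coeff g 1) = C"
    using split[of 1] av_add_eq_of_less by (metis C_def)
  moreover have "av (coeff g 0) \<le> \<rho> * C"
    using close[of 0] \<delta> root by (simp add: C_def poly_0_coeff_0)
  moreover have "av (coeff g j) \<le> B + C" for j
  proof -
    have "av (coeff g j - coeff h j) \<le> B + C" "av (coeff h j) \<le> B + C"
      using close[of j] B[of j] \<open>B \<ge> 0\<close> \<delta> unfolding C_def by linarith+
    then show ?thesis
      using split[of j] av_add_le by metis
  qed
  ultimately show ?thesis
    using poly_root_near_0[of \<rho> g "B + C"] \<rho> by (simp add: C_def)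
qed

lemma simple_root_0_persists:
  fixes h :: "'a poly"
  assumes root: "poly h 0 = 0" and simple: "coeff h 1 \<noteq> 0" and "\<epsilon> > 0"
  shows "\<exists>\<delta>>0. \<forall>g. (\<forall>j. av (coeff g j - coeff h j) \<le> \<delta>) \<longrightarrow> (\<exists>t. poly g t = 0 \<and> av t < \<epsilon>)"
proof -
  define C where "C = av (coeff h 1)"
  define B where "B = (\<Sum>j\<le>degree h. av (coeff h j))"
  define \<rho> where "\<rho> = min (min 1 (\<epsilon> / 2)) (C / (2 * (B + C)))"
  have "C > 0"
    using simple av_pos by (simp add: C_def)
  have B: "av (coeff h j) \<le> B" for j
    using av_nonneg
    by (cases "j \<le> degree h") (auto simp: B_def coeff_eq_0 sum_nonneg intro!: member_le_sum)
  then have "B + C > 0"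
    using \<open>C > 0\<close> av_nonneg order_trans by (metis add_nonneg_pos)
  have \<rho>: "0 < \<rho>" "\<rho> \<le> 1" "\<rho> < \<epsilon>" "(B + C) * \<rho> < C"
  proof -
    have "(B + C) * \<rho> \<le> (B + C) * (C / (2 * (B + C)))"
      using \<open>B + C > 0\<close> by (intro mult_left_mono) (auto simp: \<rho>_def)
    also have "\<dots> = C / 2"
      using \<open>B + C > 0\<close> by (simp add: field_simps)
    also have "\<dots> < C"
      using \<open>C > 0\<close> by simp
    finally show "(B + C) * \<rho> < C" .
  qed (use \<open>\<epsilon> > 0\<close> \<open>B + C > 0\<close> \<open>C > 0\<close> in \<open>auto simp: \<rho>_def\<close>)
  show ?thesis
  proof (rule exI[of _ "\<rho> * C / 2"], intro conjI allI impI)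
    show "\<rho> * C / 2 > 0"
      using \<rho> \<open>C > 0\<close> by simp
    fix g
    assume "\<forall>j. av (coeff g j - coeff h j) \<le> \<rho> * C / 2"
    then obtain t where "av t \<le> \<rho>" "poly g t = 0"
      using poly_root_near_0_if_coeffs_close[OF root B, of \<rho> g] \<rho> by (auto simp: C_def)
    then show "\<exists>t. poly g t = 0 \<and> av t < \<epsilon>"
      using \<rho> by auto
  qed
qed

lemma simple_root_persists:
  fixes h :: "'a poly"
  assumes root: "poly h y = 0" and simple: "poly (pderiv h) y \<noteq> 0" and "\<epsilon> > 0"
  shows "\<exists>\<delta>>0. \<forall>g. degree g \<le> degree h \<longrightarrow> (\<forall>j. av (coeff g j - coeff h j) < \<delta>) \<longrightarrow>
           (\<exists>y'. poly g y' = 0 \<and> av (y' - y) < \<epsilon>)"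
proof -
  define Q where "Q = [:y, 1:]"
  define m where "m = max 1 (av y) ^ degree h"
  have "m \<ge> 1"
    by (simp add: m_def)
  have "poly (pcompose h Q) 0 = 0"
    using root by (simp add: Q_def poly_pcompose)
  moreover have "coeff (pcompose h Q) 1 \<noteq> 0"
  proof -
    have "coeff (pcompose h Q) 1 = poly (pderiv (pcompose h Q)) 0"
      by (simp add: coeff_pderiv poly_0_coeff_0)
    also have "\<dots> = poly (pderiv h) y"
      by (simp add: Q_def pderiv_pcompose poly_pcompose pderiv_pCons)
    finally show ?thesis
      using simple by simp
  qed
  ultimately obtain \<delta> where "\<delta> > 0" and \<delta>: "\<And>g. (\<forall>j. av (coeff g j - coeff (pcompose h Q) j) \<le> \<delta>) \<Longrightarrow>
      \<exists>t. poly g t = 0 \<and> av t < \<epsilon>"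
    using simple_root_0_persists \<open>\<epsilon> > 0\<close> by blast
  have "\<exists>y'. poly g y' = 0 \<and> av (y' - y) < \<epsilon>"
    if deg: "degree g \<le> degree h" and close: "\<forall>j. av (coeff g j - coeff h j) < \<delta> / m" for g
  proof -
    have "av (coeff (pcompose (g - h) Q) j) \<le> \<delta> / m * max 1 (av y) ^ degree (g - h)" for j
      unfolding Q_def using close by (intro av_coeff_pcompose_le) (simp add: less_imp_le)
    also have "\<dots> \<le> \<delta> / m * m"
      using deg \<open>\<delta> > 0\<close> \<open>m \<ge> 1\<close> unfolding m_def
      by (intro mult_left_mono power_increasing) (auto simp: degree_diff_le)
    finally have "av (coeff (pcompose g Q) j - coeff (pcompose h Q) j) \<le> \<delta>" for j
      using \<open>m \<ge> 1\<close> by (simp add: pcompose_diff)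
    then obtain t where "poly (pcompose g Q) t = 0" "av t < \<epsilon>"
      using \<delta> by blast
    then show ?thesis
      by (intro exI[of _ "y + t"]) (simp add: Q_def poly_pcompose add.commute)
  qed
  moreover have "\<delta> / m > 0"
    using \<open>\<delta> > 0\<close> \<open>m \<ge> 1\<close> by simp
  ultimately show ?thesis
    by blast
qed

end

locale padic_field =
  fixes p :: nat and av :: "'a::field_char_0 \<Rightarrow> real"
  assumes prime_p: "prime p" and is_Qp: "is_Qp p av"

sublocale padic_field \<subseteq> complete_ultrametric_abs av
  using is_Qp unfolding is_Qp_def by unfold_locales blast+

context padic_field
begin

lemma av_of_rat: "av (of_rat q) = padic_abs_rat p q"
  using is_Qp unfolding is_Qp_def by blast

lemma of_rat_dense: "e > 0 \<Longrightarrow> \<exists>q. av (x - of_rat q) < e"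
  using is_Qp unfolding is_Qp_def by blast

lemma p_gt_1: "real p > 1"
  using prime_gt_1_nat[OF prime_p] by simp

lemma av_of_nat_p: "av (of_nat p) = 1 / real p"
proof -
  have "multiplicity (int p) (int p) = 1"
    using prime_p by (intro multiplicity_self) (auto simp: prime_int_iff prime_gt_1_nat)
  then have "padic_abs_rat p (of_nat p) = 1 / real p"
    using p_gt_1 by (simp add: padic_abs_rat_def powr_minus_divide)
  then show ?thesis
    using av_of_rat[of "of_nat p"] by simp
qed

text \<open>Every \<open>x \<noteq> 0\<close> has a rational approximation of the same absolute value.\<close>

lemma av_eq_powr_int:
  assumes "x \<noteq> 0"
  obtains j :: int where "av x = real p powr j"
proof -
  obtain q where q: "av (x - of_rat q) < av x"
    using of_rat_dense av_pos[OF assms] by blast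
  then have "av (of_rat q) = av x"
    using av_add_eq_of_less[of "of_rat q - x" x] by (simp add: av_minus_commute)
  moreover obtain a b where "quotient_of q = (a, b)"
    by fastforce
  ultimately have "av x = real p powr (real (multiplicity (int p) b) - real (multiplicity (int p) a))"
    using av_of_rat[of q] av_pos[OF assms] by (auto simp: padic_abs_rat_def split: if_splits)
  then show ?thesis
    using that by (metis of_int_diff of_int_of_nat_eq)
qed

lemma av_sq_neq_odd_powr:
  fixes j :: int
  shows "av (x * x) \<noteq> real p powr (2 * j - 1)"
proof
  assume eq: "av (x * x) = real p powr (2 * j - 1)"
  then have "x \<noteq> 0"
    using p_gt_1 by auto
  then obtain i :: int where i: "av x = real p powr i"
    by (rule av_eq_powr_int)
  have "real p powr i * real p powr i = real p powr (2 * j - 1)"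
    using eq i by (simp add: av_mult)
  then have "real p powr (2 * i) = real p powr (2 * j - 1)"
    using p_gt_1 by (simp add: powr_add[symmetric])
  then have "real_of_int (2 * i) = real_of_int (2 * j - 1)"
    using p_gt_1 by (subst (asm) powr_inj) auto
  then have "2 * i = 2 * j - 1"
    by (simp only: of_int_eq_iff)
  then show False
    by presburger
qed

lemma av_le_1_if_sq_eq:
  assumes eq: "y * y = y + of_nat p * (z * z)"
  shows "av z \<le> 1"
proof (rule ccontr)
  assume z: "\<not> av z \<le> 1"
  then obtain j :: int where j: "av z = real p powr j"
    using av_eq_powr_int[of z] by fastforce
  with z have "real p powr 0 < real p powr j"
    using p_gt_1 by simp
  then have "j \<ge> 1"
    by (subst (asm) powr_less_cancel_iff[OF p_gt_1]) simp
  have "y * y - y = of_nat p * (z * z)"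
    using eq by simp
  then have "av (y * y - y) = real p powr j * real p powr j / real p"
    by (simp add: av_mult av_of_nat_p j)
  also have "\<dots> = real p powr (2 * j - 1)"
    using p_gt_1 by (simp add: powr_diff powr_add[symmetric])
  finally have rhs: "av (y * y - y) = real p powr (2 * j - 1)" .
  show False
  proof (cases "av y \<le> 1")
    case True
    then have "av (y * y - y) \<le> 1"
      by (intro av_diff_le) (simp_all add: av_mult av_nonneg mult_le_one)
    moreover have "1 < real p powr (2 * j - 1)"
      using \<open>j \<ge> 1\<close> p_gt_1 powr_less_cancel_iff[OF p_gt_1, of 0] by simp
    ultimately show False
      using rhs by simp
  next
    case False
    then have "av (- y + y * y) = av (y * y)"
      by (intro av_add_eq_of_less) (simp add: av_mult)
    then show False
      using rhs av_sq_neq_odd_powr[of y j] by simp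
  qed
qed

lemma ex_sq_eq_if_av_le:
  assumes "av w \<le> 1 / real p"
  shows "\<exists>y. y * y = y + w"
proof -
  define q where "q = [:-w, -1, 1:]"
  have "\<exists>t. av t \<le> 1 / real p \<and> poly q t = 0"
  proof (rule poly_root_near_0[where M = 1])
    show "0 < 1 / real p" "1 / real p \<le> 1"
      using p_gt_1 by simp_all
    show "av (coeff q j) \<le> 1" if "j \<ge> 2" for j
      using that by (cases "j = 2") (simp_all add: q_def coeff_eq_0 numeral_2_eq_2)
    show "1 * (1 / real p) < av (coeff q 1)" "av (coeff q 0) \<le> 1 / real p * av (coeff q 1)"
      using p_gt_1 assms by (simp_all add: q_def)
  qed
  then obtain t where "poly q t = 0"
    by blast
  then have "t * t = t + w"
    by (simp add: q_def algebra_simps)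
  then show ?thesis
    by blast
qed

text \<open>\<open>\<int>\<^sub>p\<close> is existentially definable in the language of rings.\<close>

lemma av_le_1_iff_ex_sq_eq: "av z \<le> 1 \<longleftrightarrow> (\<exists>y. y * y = y + of_nat p * (z * z))"
proof
  assume "av z \<le> 1"
  then have "av (of_nat p * (z * z)) \<le> 1 / real p"
    using p_gt_1 av_nonneg[of z] by (simp add: av_mult av_of_nat_p mult_le_one divide_le_cancel)
  then show "\<exists>y. y * y = y + of_nat p * (z * z)"
    by (rule ex_sq_eq_if_av_le)
qed (use av_le_1_if_sq_eq in blast)

end

section \<open>Adequate sets of algebraic numbers\<close>

definition partial_hom_on :: "'a::field set \<Rightarrow> ('a \<Rightarrow> 'a) \<Rightarrow> bool" where
  "partial_hom_on A f \<longleftrightarrow> (1 \<in> A \<longrightarrow> f 1 = 1) \<and>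
     (\<forall>a\<in>A. \<forall>b\<in>A. a + b \<in> A \<longrightarrow> f (a + b) = f a + f b) \<and>
     (\<forall>a\<in>A. \<forall>b\<in>A. a * b \<in> A \<longrightarrow> f (a * b) = f a * f b)"

lemma adequate_iff_partial_hom_on:
  "adequate A r \<longleftrightarrow> finite A \<and> r \<in> A \<and> (\<forall>f. partial_hom_on A f \<longrightarrow> f r = r)"
  unfolding adequate_def partial_hom_on_def by blast

lemma tilde_iff_partial_hom_on:
  "r \<in> tilde \<longleftrightarrow> (\<exists>A. finite A \<and> r \<in> A \<and> (\<forall>f. partial_hom_on A f \<longrightarrow> f r = r))"
  unfolding tilde_def adequate_iff_partial_hom_on by blast

context
  fixes A f
  assumes f: "partial_hom_on A f"
begin

lemma partial_hom_on_1: "1 \<in> A \<Longrightarrow> f 1 = 1"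
  using f unfolding partial_hom_on_def by blast

lemma partial_hom_on_add: "a \<in> A \<Longrightarrow> b \<in> A \<Longrightarrow> a + b \<in> A \<Longrightarrow> f (a + b) = f a + f b"
  using f unfolding partial_hom_on_def by blast

lemma partial_hom_on_mult: "a \<in> A \<Longrightarrow> b \<in> A \<Longrightarrow> a * b \<in> A \<Longrightarrow> f (a * b) = f a * f b"
  using f unfolding partial_hom_on_def by blast

lemma partial_hom_on_0: "0 \<in> A \<Longrightarrow> f 0 = 0"
  using partial_hom_on_add[of 0 0] by (metis add_0 add_cancel_right_right)

lemma partial_hom_on_fixes_factor:
  assumes "x \<in> A" "y \<in> A" "x * y \<in> A" "f y = y" "f (x * y) = x * y" "y \<noteq> 0"
  shows "f x = x"
  using partial_hom_on_mult[OF assms(1-3)] assms(4-6) by simp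

lemma partial_hom_on_of_int:
  assumes A: "of_int ` {-M..M} \<subseteq> A" and "\<bar>n\<bar> \<le> M"
  shows "f (of_int n) = of_int n"
proof -
  have in_A: "of_int m \<in> A" if "\<bar>m\<bar> \<le> M" for m
    using A that by (auto simp: abs_le_iff)
  have f_nat: "f (of_nat k) = of_nat k" if "int k \<le> M" for k
    using that
  proof (induction k)
    case 0
    then show ?case
      using partial_hom_on_0 in_A[of 0] by simp
  next
    case (Suc k)
    have "f (of_nat k + 1) = f (of_nat k) + f 1"
      using in_A[of "int k"] in_A[of 1] in_A[of "int k + 1"] Suc.prems
      by (intro partial_hom_on_add) auto
    then show ?case
      using Suc partial_hom_on_1 in_A[of 1] by (simp add: add.commute)
  qed
  show ?thesis
  proof (cases "n \<ge> 0")
    case True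
    then show ?thesis
      using f_nat[of "nat n"] \<open>\<bar>n\<bar> \<le> M\<close> by simp
  next
    case False
    have "f (of_int (- n)) = of_int (- n)"
      using f_nat[of "nat (- n)"] \<open>\<bar>n\<bar> \<le> M\<close> False by simp
    moreover have "f (of_int n + of_int (- n)) = f (of_int n) + f (of_int (- n))"
      using in_A[of n] in_A[of "- n"] in_A[of 0] \<open>\<bar>n\<bar> \<le> M\<close> by (intro partial_hom_on_add) auto
    ultimately have "f (of_int n) + - of_int n = 0"
      using partial_hom_on_0 in_A[of 0] \<open>\<bar>n\<bar> \<le> M\<close> by simp
    then show ?thesis
      by (simp add: add_eq_0_iff)
  qed
qed

end

text \<open>The intermediate values of Horner's scheme, which a partial homomorphism has to see in order
  to commute with evaluation of the polynomial.\<close>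

fun horner_set :: "'a::comm_ring_1 list \<Rightarrow> 'a \<Rightarrow> 'a set" where
  "horner_set [] x = {0}"
| "horner_set (c # cs) x = {c, x * poly (Poly cs) x, c + x * poly (Poly cs) x} \<union> horner_set cs x"

lemma finite_horner_set: "finite (horner_set cs x)"
  by (induction cs) auto

lemma zero_in_horner_set: "0 \<in> horner_set cs x"
  by (induction cs) auto

lemma poly_in_horner_set: "poly (Poly cs) x \<in> horner_set cs x"
  by (cases cs) auto

lemma partial_hom_on_poly:
  assumes f: "partial_hom_on A f" and "x \<in> A" and "horner_set cs x \<subseteq> A" and "\<forall>c\<in>set cs. f c = c"
  shows "f (poly (Poly cs) x) = poly (Poly cs) (f x)"
  using assms(3,4)
proof (induction cs)
  case Nil
  then show ?case
    using partial_hom_on_0[OF f] by simp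
next
  case (Cons c cs)
  define P where "P = poly (Poly cs) x"
  have "P \<in> A" "c \<in> A" "x * P \<in> A" "c + x * P \<in> A"
    using Cons.prems(1) poly_in_horner_set[of cs x] by (auto simp: P_def)
  then have "f (c + x * P) = c + f x * f P"
    using Cons.prems(2) \<open>x \<in> A\<close> partial_hom_on_add[OF f] partial_hom_on_mult[OF f] by simp
  then show ?case
    using Cons by (simp add: P_def)
qed

lemma partial_hom_on_poly_root:
  assumes f: "partial_hom_on A f" and "x \<in> A" "horner_set (coeffs g) x \<subseteq> A"
    and "\<forall>c\<in>set (coeffs g). f c = c" "poly g x = 0"
  shows "poly g (f x) = 0"
proof -
  have "f (poly g x) = poly g (f x)"
    using partial_hom_on_poly[OF f assms(2-4)] by simp
  moreover have "f 0 = 0"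
    using partial_hom_on_0[OF f] zero_in_horner_set assms(3) by blast
  ultimately show ?thesis
    using assms(5) by simp
qed

lemma finite_Ints_subset_of_int_interval:
  assumes "finite S" "S \<subseteq> \<int>"
  obtains M where "S \<subseteq> of_int ` {-M..M}"
proof -
  have "\<exists>M. S \<subseteq> of_int ` {-M..M}"
    using assms
  proof (induction S rule: finite_induct)
    case (insert x S)
    then obtain M n where M: "S \<subseteq> of_int ` {-M..M}" and "x = of_int n"
      by (auto elim: Ints_cases)
    then have "insert x S \<subseteq> of_int ` {-max M \<bar>n\<bar>..max M \<bar>n\<bar>}"
      by (fastforce simp: abs_le_iff)
    then show ?case
      by blast
  qed simp
  then show ?thesis
    using that by blast
qed

context padic_field
begin

lemma av_le_1_if_partial_hom_on:
  assumes f: "partial_hom_on A f" and eq: "y * y = y + of_nat p * (z * z)"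
    and "{y, y * y, z, z * z, of_nat p, of_nat p * (z * z)} \<subseteq> A" and "f (of_nat p) = of_nat p"
  shows "av (f z) \<le> 1"
proof -
  have "f y * f y = f y + of_nat p * (f z * f z)"
    using eq assms(3,4) partial_hom_on_add[OF f, of y "of_nat p * (z * z)"]
      partial_hom_on_mult[OF f, of y y] partial_hom_on_mult[OF f, of "of_nat p" "z * z"]
      partial_hom_on_mult[OF f, of z z] by auto
  then show ?thesis
    using av_le_1_iff_ex_sq_eq by blast
qed

lemma rat_plus_small_multiple:
  assumes "\<delta> > 0"
  obtains c k z where "x = of_rat c + of_nat p ^ k * z" "av (of_nat p ^ k :: 'a) < \<delta>" "av z \<le> 1"
proof -
  obtain k where k: "(1 / real p) ^ k < \<delta>"
    using real_arch_pow_inv[OF \<open>\<delta> > 0\<close>, of "1 / real p"] p_gt_1 by auto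
  define s :: 'a where "s = of_nat p ^ k"
  have "av s = (1 / real p) ^ k"
    by (simp add: s_def av_power av_of_nat_p)
  then have "av s > 0" "s \<noteq> 0" "av s < \<delta>"
    using p_gt_1 k by auto
  moreover obtain c where "av (x - of_rat c) < av s"
    using of_rat_dense \<open>av s > 0\<close> by blast
  ultimately show ?thesis
    using that[of c k "(x - of_rat c) / s"] by (simp add: s_def av_divide)
qed

lemma algebraic_in_tilde:
  fixes r :: 'a
  assumes "algebraic r"
  shows "r \<in> tilde"
proof -
  obtain g where g_Ints: "\<And>i. coeff g i \<in> \<int>" and "g \<noteq> 0" and "poly g r = 0"
    using assms unfolding algebraic_def by blast
  obtain \<delta> where "\<delta> > 0" and isolated: "\<And>x. poly g x = 0 \<Longrightarrow> av (x - r) < \<delta> \<Longrightarrow> x = r"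
    using poly_root_isolated[OF \<open>g \<noteq> 0\<close>] by blast
  obtain c k z where r_eq: "r = of_rat c + of_nat p ^ k * z" and s: "av (of_nat p ^ k :: 'a) < \<delta>"
    and "av z \<le> 1"
    using \<open>\<delta> > 0\<close> by (rule rat_plus_small_multiple)
  define s :: 'a where "s = of_nat p ^ k"
  obtain y where y: "y * y = y + of_nat p * (z * z)"
    using av_le_1_iff_ex_sq_eq \<open>av z \<le> 1\<close> by blast
  obtain u v where "quotient_of c = (u, v)"
    by fastforce
  then have "v > 0" "c = of_int u / of_int v"
    by (simp_all add: quotient_of_denom_pos quotient_of_div)
  then have c_eq: "of_rat c * of_int v = (of_int u :: 'a)"
    by (simp add: of_rat_divide)
  define Z where "Z = {of_int u, of_int v, s, of_nat p} \<union> set (coeffs g)"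
  have "finite Z" "Z \<subseteq> \<int>"
    using g_Ints by (auto simp: Z_def s_def coeffs_def)
  then obtain M where M: "Z \<subseteq> of_int ` {-M..M}"
    by (rule finite_Ints_subset_of_int_interval)
  define A where
    "A = {r, of_rat c, z, s * z, y, y * y, z * z, of_nat p * (z * z)} \<union> of_int ` {-M..M} \<union>
       horner_set (coeffs g) r"
  have "f r = r" if f: "partial_hom_on A f" for f
  proof -
    have f_Z: "f x = x" if "x \<in> Z" for x
      using partial_hom_on_of_int[OF f] M that by (force simp: A_def)
    have f_c: "f (of_rat c) = of_rat c"
      by (rule partial_hom_on_fixes_factor[OF f, of _ "of_int v"])
        (use c_eq \<open>v > 0\<close> f_Z M in \<open>auto simp: A_def Z_def\<close>)
    have "f r = of_rat c + s * f z"
      using partial_hom_on_add[OF f, of "of_rat c" "s * z"] partial_hom_on_mult[OF f, of s z]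
        f_c f_Z M r_eq by (auto simp: A_def Z_def s_def)
    then have "f r - r = s * (f z - z)"
      using r_eq by (simp add: s_def algebra_simps)
    moreover have "av (f z) \<le> 1"
      by (rule av_le_1_if_partial_hom_on[OF f y]) (use f_Z M in \<open>auto simp: A_def Z_def\<close>)
    then have "av (f z - z) \<le> 1"
      using \<open>av z \<le> 1\<close> by (rule av_diff_le)
    ultimately have "av (f r - r) \<le> av s"
      using av_nonneg[of s] by (simp add: av_mult mult_left_le)
    then have "av (f r - r) < \<delta>"
      using s by (simp add: s_def)
    moreover have "poly g (f r) = 0"
      by (rule partial_hom_on_poly_root[OF f])
        (use f_Z \<open>poly g r = 0\<close> in \<open>auto simp: A_def Z_def\<close>)
    ultimately show "f r = r"
      using isolated by blast
  qed
  moreover have "finite A" "r \<in> A"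
    by (simp_all add: A_def finite_horner_set)
  ultimately show ?thesis
    unfolding tilde_iff_partial_hom_on by blast
qed

end

section \<open>Integer polynomials in finitely many variables\<close>

text \<open>Polynomials in \<open>x\<^sub>0, \<dots>, x\<^sub>k\<^sub>-\<^sub>1\<close> with integer coefficients, represented by the functions they
  induce on sequences \<open>x :: nat \<Rightarrow> 'a\<close>.\<close>

inductive_set int_poly_fun :: "nat \<Rightarrow> ((nat \<Rightarrow> 'a::comm_ring_1) \<Rightarrow> 'a) set" for k where
  int_poly_fun_var: "i < k \<Longrightarrow> (\<lambda>x. x i) \<in> int_poly_fun k"
| int_poly_fun_const: "(\<lambda>x. of_int n) \<in> int_poly_fun k"
| int_poly_fun_add: "f \<in> int_poly_fun k \<Longrightarrow> g \<in> int_poly_fun k \<Longrightarrow> f + g \<in> int_poly_fun k"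
| int_poly_fun_mult: "f \<in> int_poly_fun k \<Longrightarrow> g \<in> int_poly_fun k \<Longrightarrow> f * g \<in> int_poly_fun k"

lemma int_poly_fun_of_nat: "of_nat n \<in> int_poly_fun k"
  using int_poly_fun_const[of "int n"] by (simp add: of_nat_fun)

lemma int_poly_fun_0: "0 \<in> int_poly_fun k"
  using int_poly_fun_of_nat[of 0] by simp

lemma int_poly_fun_1: "1 \<in> int_poly_fun k"
  using int_poly_fun_of_nat[of 1] by simp

lemma int_poly_fun_diff: "f \<in> int_poly_fun k \<Longrightarrow> g \<in> int_poly_fun k \<Longrightarrow> f - g \<in> int_poly_fun k"
proof -
  assume "f \<in> int_poly_fun k" "g \<in> int_poly_fun k"
  then have "f + (\<lambda>x. of_int (-1)) * g \<in> int_poly_fun k"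
    by (intro int_poly_fun_add int_poly_fun_mult int_poly_fun_const)
  moreover have "f + (\<lambda>x. of_int (-1)) * g = f - g"
    by (rule ext) simp
  ultimately show ?thesis
    by simp
qed

lemma int_poly_fun_sum: "(\<And>i. i \<in> S \<Longrightarrow> f i \<in> int_poly_fun k) \<Longrightarrow> sum f S \<in> int_poly_fun k"
  by (induction S rule: infinite_finite_induct) (simp_all add: int_poly_fun_0 int_poly_fun_add)

lemma int_poly_fun_cong: "c \<in> int_poly_fun k \<Longrightarrow> (\<And>i. i < k \<Longrightarrow> x i = x' i) \<Longrightarrow> c x = c x'"
  by (induction rule: int_poly_fun.induct) simp_all

lemma int_poly_fun_0_const: "c \<in> int_poly_fun 0 \<Longrightarrow> \<exists>n. c = (\<lambda>x. of_int n)"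
proof (induction rule: int_poly_fun.induct)
  case (int_poly_fun_add f g)
  then obtain n m where "f = (\<lambda>x. of_int n)" "g = (\<lambda>x. of_int m)"
    by blast
  then show ?case
    by (intro exI[of _ "n + m"]) (auto simp: plus_fun_def)
next
  case (int_poly_fun_mult f g)
  then obtain n m where "f = (\<lambda>x. of_int n)" "g = (\<lambda>x. of_int m)"
    by blast
  then show ?case
    by (intro exI[of _ "n * m"]) (auto simp: times_fun_def)
qed auto

lemma sum_fun_apply: "sum g S x = (\<Sum>i\<in>S. g i x)"
  by (induction S rule: infinite_finite_induct) auto

lemma power_fun_apply: "(f ^ n) x = f x ^ n"
  by (induction n) simp_all

definition eval_coeffs :: "(nat \<Rightarrow> 'a::comm_ring_1) \<Rightarrow> ((nat \<Rightarrow> 'a) \<Rightarrow> 'a) poly \<Rightarrow> 'a poly" where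
  "eval_coeffs x P = map_poly (\<lambda>c. c x) P"

lemma coeff_eval_coeffs [simp]: "coeff (eval_coeffs x P) j = coeff P j x"
  by (simp add: eval_coeffs_def coeff_map_poly)

lemma eval_coeffs_0 [simp]: "eval_coeffs x 0 = 0"
  by (simp add: eval_coeffs_def)

lemma eval_coeffs_eq_0_iff: "eval_coeffs x P = 0 \<longleftrightarrow> (\<forall>j. coeff P j x = 0)"
  by (auto simp: poly_eq_iff)

lemma degree_eval_coeffs_le: "degree (eval_coeffs x P) \<le> degree P"
  by (rule degree_le) (simp add: coeff_eq_0)

lemma eval_coeffs_add [simp]: "eval_coeffs x (P + Q) = eval_coeffs x P + eval_coeffs x Q"
  by (rule poly_eqI) simp

lemma eval_coeffs_mult [simp]: "eval_coeffs x (P * Q) = eval_coeffs x P * eval_coeffs x Q"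
  by (rule poly_eqI) (simp add: coeff_mult sum_fun_apply)

lemma eval_coeffs_smult [simp]: "eval_coeffs x (smult c P) = smult (c x) (eval_coeffs x P)"
  by (rule poly_eqI) simp

lemma eval_coeffs_pCons [simp]: "eval_coeffs x (pCons c P) = pCons (c x) (eval_coeffs x P)"
  by (rule poly_eqI) (simp add: coeff_pCons split: nat.split)

lemma eval_coeffs_cong:
  "(\<forall>j. coeff P j \<in> int_poly_fun k) \<Longrightarrow> (\<And>i. i < k \<Longrightarrow> x i = x' i) \<Longrightarrow>
     eval_coeffs x P = eval_coeffs x' P"
  by (rule poly_eqI) (metis coeff_eval_coeffs int_poly_fun_cong)

lemma int_poly_fun_Suc_as_poly:
  assumes "e \<in> int_poly_fun (Suc k)"
  shows "\<exists>P. (\<forall>j. coeff P j \<in> int_poly_fun k) \<and> (\<forall>x. e x = poly (eval_coeffs x P) (x k))"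
  using assms
proof (induction rule: int_poly_fun.induct)
  case (int_poly_fun_var i)
  show ?case
  proof (cases "i = k")
    case True
    then show ?thesis
      by (intro exI[of _ "[:0, 1:]"]) (auto simp: coeff_pCons int_poly_fun_0 int_poly_fun_1 split: nat.split)
  next
    case False
    then have "(\<lambda>x. x i) \<in> int_poly_fun k"
      using int_poly_fun_var by (intro int_poly_fun.int_poly_fun_var) simp
    then show ?thesis
      by (intro exI[of _ "[:\<lambda>x. x i:]"]) (auto simp: coeff_pCons int_poly_fun_0 split: nat.split)
  qed
next
  case (int_poly_fun_const n)
  show ?case
    by (intro exI[of _ "[:\<lambda>x. of_int n:]"])
      (auto simp: coeff_pCons int_poly_fun_0 int_poly_fun.int_poly_fun_const split: nat.split)
next
  case (int_poly_fun_add f g)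
  then obtain P Q where "\<forall>j. coeff P j \<in> int_poly_fun k" "\<forall>x. f x = poly (eval_coeffs x P) (x k)"
    and "\<forall>j. coeff Q j \<in> int_poly_fun k" "\<forall>x. g x = poly (eval_coeffs x Q) (x k)"
    by blast
  moreover have "\<forall>j. coeff (P + Q) j \<in> int_poly_fun k"
    using calculation unfolding coeff_add by (blast intro: int_poly_fun.int_poly_fun_add)
  moreover have "\<forall>x. (f + g) x = poly (eval_coeffs x (P + Q)) (x k)"
    using calculation by simp
  ultimately show ?case
    by blast
next
  case (int_poly_fun_mult f g)
  then obtain P Q where "\<forall>j. coeff P j \<in> int_poly_fun k" "\<forall>x. f x = poly (eval_coeffs x P) (x k)"
    and "\<forall>j. coeff Q j \<in> int_poly_fun k" "\<forall>x. g x = poly (eval_coeffs x Q) (x k)"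
    by blast
  then show ?case
    by (intro exI[of _ "P * Q"])
      (simp add: coeff_mult int_poly_fun_sum int_poly_fun.int_poly_fun_mult)
qed

text \<open>\<open>pderiv\<close> needs a ring without zero divisors, which the ring of functions is not.\<close>

definition formal_deriv :: "'a::comm_ring_1 poly \<Rightarrow> 'a poly" where
  "formal_deriv P = (\<Sum>j<degree P. monom (of_nat (Suc j) * coeff P (Suc j)) j)"

lemma coeff_formal_deriv: "coeff (formal_deriv P) j = of_nat (Suc j) * coeff P (Suc j)"
  by (cases "j < degree P") (simp_all add: formal_deriv_def coeff_sum coeff_monom coeff_eq_0)

lemma eval_coeffs_formal_deriv:
  "eval_coeffs x (formal_deriv P) = pderiv (eval_coeffs x (P :: ((nat \<Rightarrow> 'a::idom) \<Rightarrow> 'a) poly))"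
  by (rule poly_eqI) (simp add: coeff_formal_deriv coeff_pderiv)

lemma int_poly_fun_formal_deriv:
  "\<forall>j. coeff P j \<in> int_poly_fun k \<Longrightarrow> \<forall>j. coeff (formal_deriv P) j \<in> int_poly_fun k"
  unfolding coeff_formal_deriv by (blast intro: int_poly_fun_mult int_poly_fun_of_nat)

context
  fixes S :: "'a::comm_ring_1 set"
  assumes S_0: "0 \<in> S" and S_diff: "\<And>a b. a \<in> S \<Longrightarrow> b \<in> S \<Longrightarrow> a - b \<in> S"
    and S_mult: "\<And>a b. a \<in> S \<Longrightarrow> b \<in> S \<Longrightarrow> a * b \<in> S"
begin

lemma coeff_pseudo_divmod_main_in:
  assumes "\<forall>j. coeff d j \<in> S" "lc \<in> S" "\<forall>j. coeff r j \<in> S"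
  shows "coeff (snd (pseudo_divmod_main lc q r d dr n)) j \<in> S"
  using assms(3)
proof (induction n arbitrary: q r dr)
  case (Suc n)
  have "coeff (smult lc r - monom (coeff r dr) n * d) i \<in> S" for i
    using Suc.prems assms(1,2) S_0 by (auto simp: coeff_monom_mult intro!: S_diff S_mult)
  then show ?case
    by (simp add: Let_def Suc.IH)
qed simp

lemma pseudo_divmod_in:
  assumes "g \<noteq> 0" "\<forall>j. coeff f j \<in> S" "\<forall>j. coeff g j \<in> S"
  obtains N q r where "smult (lead_coeff g ^ N) f = g * q + r"
    and "r = 0 \<or> degree r < degree g" and "\<forall>j. coeff r j \<in> S"
proof -
  obtain q r where qr: "pseudo_divmod f g = (q, r)"
    by fastforce
  then have "r = snd (pseudo_divmod_main (lead_coeff g) 0 f g (degree f)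
      (1 + length (coeffs f) - length (coeffs g)))"
    using assms(1) by (simp add: pseudo_divmod_def)
  then have "\<forall>j. coeff r j \<in> S"
    using coeff_pseudo_divmod_main_in assms(2,3) by simp
  then show ?thesis
    using that pseudo_divmod[OF assms(1) qr] by blast
qed

end

context ultrametric_abs
begin

lemma int_poly_fun_continuous:
  assumes "c \<in> int_poly_fun k" "\<delta> > 0"
  shows "\<exists>\<eta>>0. \<forall>b. (\<forall>i<k. av (b i - a i) < \<eta>) \<longrightarrow> av (c b - c a) < \<delta>"
  using assms
proof (induction arbitrary: \<delta> rule: int_poly_fun.induct)
  case (int_poly_fun_var i)
  then show ?case
    by (intro exI[of _ \<delta>]) auto
next
  case (int_poly_fun_const n)
  then show ?case
    by (intro exI[of _ 1]) auto
next
  case (int_poly_fun_add f g)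
  obtain \<eta>1 where "\<eta>1 > 0" and \<eta>1: "\<forall>b. (\<forall>i<k. av (b i - a i) < \<eta>1) \<longrightarrow> av (f b - f a) < \<delta>"
    using int_poly_fun_add.IH(1)[OF int_poly_fun_add.prems] by blast
  obtain \<eta>2 where "\<eta>2 > 0" and \<eta>2: "\<forall>b. (\<forall>i<k. av (b i - a i) < \<eta>2) \<longrightarrow> av (g b - g a) < \<delta>"
    using int_poly_fun_add.IH(2)[OF int_poly_fun_add.prems] by blast
  have "av ((f + g) b - (f + g) a) < \<delta>" if "\<forall>i<k. av (b i - a i) < min \<eta>1 \<eta>2" for b
  proof -
    have "av ((f b - f a) + (g b - g a)) < \<delta>"
      using that \<eta>1 \<eta>2 by (intro av_add_less) auto
    then show ?thesis
      by (simp add: algebra_simps)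
  qed
  then show ?case
    using \<open>\<eta>1 > 0\<close> \<open>\<eta>2 > 0\<close> by (intro exI[of _ "min \<eta>1 \<eta>2"]) auto
next
  case (int_poly_fun_mult f g)
  define K where "K = 1 + av (f a) + av (g a)"
  define d where "d = min 1 (\<delta> / K)"
  have "K > 0"
    using av_nonneg[of "f a"] av_nonneg[of "g a"] by (simp add: K_def)
  moreover have "d \<le> \<delta> / K"
    by (simp add: d_def)
  ultimately have "d > 0" "d \<le> 1" "d * K \<le> \<delta>"
    using \<open>\<delta> > 0\<close> by (auto simp: d_def pos_le_divide_eq[symmetric])
  obtain \<eta>1 where "\<eta>1 > 0" and \<eta>1: "\<forall>b. (\<forall>i<k. av (b i - a i) < \<eta>1) \<longrightarrow> av (f b - f a) < d"
    using int_poly_fun_mult.IH(1)[OF \<open>d > 0\<close>] by blast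
  obtain \<eta>2 where "\<eta>2 > 0" and \<eta>2: "\<forall>b. (\<forall>i<k. av (b i - a i) < \<eta>2) \<longrightarrow> av (g b - g a) < d"
    using int_poly_fun_mult.IH(2)[OF \<open>d > 0\<close>] by blast
  have "av ((f * g) b - (f * g) a) < \<delta>" if "\<forall>i<k. av (b i - a i) < min \<eta>1 \<eta>2" for b
  proof -
    have "av (f b - f a) < d" "av (g b - g a) < d"
      using that \<eta>1 \<eta>2 by auto
    then show ?thesis
      using av_mult_diff_less[of "f b" "f a" d "g b" "g a" \<delta>] \<open>d \<le> 1\<close> \<open>d * K \<le> \<delta>\<close>
      by (simp add: K_def)
  qed
  then show ?case
    using \<open>\<eta>1 > 0\<close> \<open>\<eta>2 > 0\<close> by (intro exI[of _ "min \<eta>1 \<eta>2"]) auto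
qed

lemma int_poly_funs_continuous:
  assumes "finite C" "C \<subseteq> int_poly_fun k" "\<delta> > 0"
  shows "\<exists>\<eta>>0. \<forall>b. (\<forall>i<k. av (b i - a i) < \<eta>) \<longrightarrow> (\<forall>c\<in>C. av (c b - c a) < \<delta>)"
  using assms(1,2)
proof (induction C rule: finite_induct)
  case (insert c C)
  obtain \<eta>1 where "\<eta>1 > 0" "\<forall>b. (\<forall>i<k. av (b i - a i) < \<eta>1) \<longrightarrow> av (c b - c a) < \<delta>"
    using int_poly_fun_continuous[of c k \<delta> a] insert.prems \<open>\<delta> > 0\<close> by blast
  moreover obtain \<eta>2 where "\<eta>2 > 0" "\<forall>b. (\<forall>i<k. av (b i - a i) < \<eta>2) \<longrightarrow> (\<forall>c\<in>C. av (c b - c a) < \<delta>)"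
    using insert.IH insert.prems by blast
  ultimately show ?case
    by (intro exI[of _ "min \<eta>1 \<eta>2"]) simp
qed (intro exI[of _ 1], simp)

end

text \<open>A small move of \<open>a\<^sub>0, \<dots>, a\<^sub>k\<^sub>-\<^sub>1\<close> perturbs the coefficients of \<open>H\<close> only a little, and
  Hensel's lemma moves the simple root \<open>y\<close> along.\<close>

lemma (in complete_ultrametric_abs) simple_root_persists_under_specialization:
  assumes H: "\<forall>j. coeff H j \<in> int_poly_fun k" and "lead_coeff H a \<noteq> 0"
    and root: "poly (eval_coeffs a H) y = 0" and simple: "poly (pderiv (eval_coeffs a H)) y \<noteq> 0"
    and "\<epsilon> > 0"
  obtains \<eta> where "\<eta> > 0" and "\<And>b. \<forall>i<k. av (b i - a i) < \<eta> \<Longrightarrow>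
    lead_coeff H b \<noteq> 0 \<and> (\<exists>y'. poly (eval_coeffs b H) y' = 0 \<and> av (y' - y) < \<epsilon>)"
proof -
  define h where "h = eval_coeffs a H"
  have deg_h: "degree h = degree H"
    using \<open>lead_coeff H a \<noteq> 0\<close> by (simp add: h_def le_antisym degree_eval_coeffs_le le_degree)
  obtain \<delta> where "\<delta> > 0" and perturb: "\<And>g. degree g \<le> degree h \<Longrightarrow>
      \<forall>j. av (coeff g j - coeff h j) < \<delta> \<Longrightarrow> \<exists>y'. poly g y' = 0 \<and> av (y' - y) < \<epsilon>"
    using simple_root_persists[OF root simple \<open>\<epsilon> > 0\<close>] unfolding h_def by blast
  define \<delta>' where "\<delta>' = min \<delta> (av (lead_coeff H a))"
  have "\<delta>' > 0"
    using \<open>\<delta> > 0\<close> \<open>lead_coeff H a \<noteq> 0\<close> av_pos by (simp add: \<delta>'_def)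
  then obtain \<eta> where "\<eta> > 0" and \<eta>: "\<And>b. \<forall>i<k. av (b i - a i) < \<eta> \<Longrightarrow>
      \<forall>c\<in>coeff H ` {..degree H}. av (c b - c a) < \<delta>'"
    using int_poly_funs_continuous[of "coeff H ` {..degree H}" k \<delta>' a] H by blast
  have "lead_coeff H b \<noteq> 0 \<and> (\<exists>y'. poly (eval_coeffs b H) y' = 0 \<and> av (y' - y) < \<epsilon>)"
    if b: "\<forall>i<k. av (b i - a i) < \<eta>" for b
  proof
    have close: "av (coeff H j b - coeff H j a) < \<delta>'" for j
      using \<eta>[OF b] \<open>\<delta>' > 0\<close> by (cases "j \<le> degree H") (auto simp: coeff_eq_0)
    show "lead_coeff H b \<noteq> 0"
      using close[of "degree H"] by (auto simp: \<delta>'_def)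
    have "degree (eval_coeffs b H) \<le> degree h"
      using degree_eval_coeffs_le[of b H] deg_h by simp
    moreover have "\<forall>j. av (coeff (eval_coeffs b H) j - coeff h j) < \<delta>"
      using close by (simp add: h_def \<delta>'_def)
    ultimately show "\<exists>y'. poly (eval_coeffs b H) y' = 0 \<and> av (y' - y) < \<epsilon>"
      by (rule perturb)
  qed
  with \<open>\<eta> > 0\<close> show ?thesis
    using that by blast
qed

section \<open>Specializations\<close>

definition specializes :: "nat \<Rightarrow> (nat \<Rightarrow> 'a::comm_ring_1) \<Rightarrow> (nat \<Rightarrow> 'a) \<Rightarrow> bool" where
  "specializes k a b \<longleftrightarrow> (\<forall>c\<in>int_poly_fun k. c a = 0 \<longrightarrow> c b = 0)"

lemma specializes_1_if_transcendental:
  fixes a b :: "nat \<Rightarrow> 'a::field_char_0"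
  assumes "\<not> algebraic (a 0)"
  shows "specializes 1 a b"
  unfolding specializes_def
proof (intro ballI impI)
  fix c :: "(nat \<Rightarrow> 'a) \<Rightarrow> 'a"
  assume "c \<in> int_poly_fun 1" "c a = 0"
  then obtain P where P: "\<forall>j. coeff P j \<in> int_poly_fun 0" and c: "\<forall>x. c x = poly (eval_coeffs x P) (x 0)"
    using int_poly_fun_Suc_as_poly[of c 0] by auto
  have const: "eval_coeffs x P = eval_coeffs a P" for x
    using P by (rule eval_coeffs_cong) simp
  have "eval_coeffs a P = 0"
  proof (rule ccontr)
    assume "eval_coeffs a P \<noteq> 0"
    moreover have "coeff (eval_coeffs a P) j \<in> \<int>" for j
    proof -
      obtain n where "coeff P j = (\<lambda>x. of_int n)"
        using int_poly_fun_0_const P by blast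
      then show ?thesis
        by simp
    qed
    ultimately have "algebraic (a 0)"
      using \<open>c a = 0\<close> c by (intro algebraicI) auto
    with assms show False ..
  qed
  then show "c b = 0"
    using c const[of b] by simp
qed

definition relation_poly :: "nat \<Rightarrow> (nat \<Rightarrow> 'a::comm_ring_1) \<Rightarrow> ((nat \<Rightarrow> 'a) \<Rightarrow> 'a) poly \<Rightarrow> bool" where
  "relation_poly k a P \<longleftrightarrow>
     (\<forall>j. coeff P j \<in> int_poly_fun k) \<and> eval_coeffs a P \<noteq> 0 \<and> poly (eval_coeffs a P) (a k) = 0"

definition minimal_relation_poly :: "nat \<Rightarrow> (nat \<Rightarrow> 'a::comm_ring_1) \<Rightarrow> ((nat \<Rightarrow> 'a) \<Rightarrow> 'a) poly \<Rightarrow> bool" where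
  "minimal_relation_poly k a H \<longleftrightarrow> relation_poly k a H \<and> degree (eval_coeffs a H) = degree H \<and>
     (\<forall>P. relation_poly k a P \<longrightarrow> degree H \<le> degree (eval_coeffs a P))"

lemma int_poly_fun_Suc_at_upd:
  assumes "e \<in> int_poly_fun (Suc k)"
  obtains P where "\<forall>j. coeff P j \<in> int_poly_fun k" "e a = poly (eval_coeffs a P) (a k)"
    and "\<And>b y. e (b(k := y)) = poly (eval_coeffs b P) y"
proof -
  obtain P where P: "\<forall>j. coeff P j \<in> int_poly_fun k" "\<forall>x. e x = poly (eval_coeffs x P) (x k)"
    using int_poly_fun_Suc_as_poly[OF assms] by blast
  have "eval_coeffs (b(k := y)) P = eval_coeffs b P" for b y
    using P(1) by (rule eval_coeffs_cong) simp
  with P that show ?thesis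
    by simp
qed

lemma specializes_Suc_if_no_relation_poly:
  assumes "\<nexists>P. relation_poly k a P" and "specializes k a b"
  shows "specializes (Suc k) a (b(k := a k))"
  unfolding specializes_def
proof (intro ballI impI)
  fix e
  assume "e \<in> int_poly_fun (Suc k)" "e a = 0"
  then obtain P where P: "\<forall>j. coeff P j \<in> int_poly_fun k" "poly (eval_coeffs a P) (a k) = 0"
    and e: "\<And>b y. e (b(k := y)) = poly (eval_coeffs b P) y"
    by (metis int_poly_fun_Suc_at_upd)
  then have "\<forall>j. coeff P j a = 0"
    using assms(1) by (auto simp: relation_poly_def eval_coeffs_eq_0_iff)
  then have "eval_coeffs b P = 0"
    using assms(2) P(1) by (simp add: specializes_def eval_coeffs_eq_0_iff)
  then show "e (b(k := a k)) = 0"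
    by (simp add: e)
qed

lemma ex_minimal_relation_poly:
  assumes "relation_poly k a P"
  obtains H where "minimal_relation_poly k a H"
proof -
  obtain H0 where H0: "relation_poly k a H0"
    and least: "\<And>P. relation_poly k a P \<Longrightarrow> degree (eval_coeffs a H0) \<le> degree (eval_coeffs a P)"
    using ex_has_least_nat[of "relation_poly k a" P "\<lambda>P. degree (eval_coeffs a P)"] assms by blast
  define d where "d = degree (eval_coeffs a H0)"
  define H where "H = poly_cutoff (Suc d) H0"
  have coeff_H: "coeff H j = (if j \<le> d then coeff H0 j else 0)" for j
    by (simp add: H_def coeff_poly_cutoff)
  have "coeff H0 j a = 0" if "j > d" for j
    using coeff_eq_0[of "eval_coeffs a H0" j] that by (simp add: d_def)
  then have "eval_coeffs a H = eval_coeffs a H0"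
    by (intro poly_eqI) (auto simp: coeff_H)
  moreover have "\<forall>j. coeff H j \<in> int_poly_fun k"
    using H0 by (simp add: coeff_H relation_poly_def int_poly_fun_0)
  ultimately have "relation_poly k a H"
    using H0 by (simp add: relation_poly_def)
  moreover have "degree H = d"
  proof (rule antisym)
    show "degree H \<le> d"
      by (rule degree_le) (simp add: coeff_H)
    have "coeff H d a \<noteq> 0"
      using H0 leading_coeff_neq_0[of "eval_coeffs a H0"] by (simp add: coeff_H d_def relation_poly_def)
    then show "d \<le> degree H"
      by (intro le_degree) auto
  qed
  ultimately have "minimal_relation_poly k a H"
    using least \<open>eval_coeffs a H = eval_coeffs a H0\<close> by (simp add: minimal_relation_poly_def d_def)
  then show ?thesis
    by (rule that)
qed

lemma minimal_relation_poly_simple_root: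
  fixes a :: "nat \<Rightarrow> 'a::{idom,ring_char_0}"
  assumes "minimal_relation_poly k a H"
  shows "poly (pderiv (eval_coeffs a H)) (a k) \<noteq> 0"
proof
  define h where "h = eval_coeffs a H"
  assume "poly (pderiv h) (a k) = 0"
  from assms have H: "relation_poly k a H" "degree h = degree H"
    and least: "\<And>P. relation_poly k a P \<Longrightarrow> degree H \<le> degree (eval_coeffs a P)"
    by (simp_all add: minimal_relation_poly_def h_def)
  have "degree h \<noteq> 0"
  proof
    assume "degree h = 0"
    then obtain c where "h = [:c:]"
      by (rule degree_eq_zeroE)
    with H show False
      by (simp add: relation_poly_def h_def)
  qed
  then have "relation_poly k a (formal_deriv H)"
    using H \<open>poly (pderiv h) (a k) = 0\<close>
    by (simp add: relation_poly_def int_poly_fun_formal_deriv eval_coeffs_formal_deriv h_def pderiv_eq_0_iff)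
  from least[OF this] have "degree h \<le> degree (pderiv h)"
    using H(2) by (simp add: eval_coeffs_formal_deriv h_def)
  with \<open>degree h \<noteq> 0\<close> show False
    by (simp add: degree_pderiv)
qed

lemma eval_coeffs_eq_0_below_minimal_relation_poly:
  assumes H: "minimal_relation_poly k a H" and R: "\<forall>j. coeff R j \<in> int_poly_fun k"
    and "R = 0 \<or> degree R < degree H" and "poly (eval_coeffs a R) (a k) = 0"
  shows "eval_coeffs a R = 0"
proof (rule ccontr)
  assume "eval_coeffs a R \<noteq> 0"
  with R assms(4) have "relation_poly k a R"
    by (simp add: relation_poly_def)
  then have "degree H \<le> degree R"
    using H degree_eval_coeffs_le[of a R] by (auto simp: minimal_relation_poly_def)
  moreover have "R \<noteq> 0"
    using \<open>eval_coeffs a R \<noteq> 0\<close> by auto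
  ultimately show False
    using assms(3) by simp
qed

text \<open>Pseudo-division by a minimal relation: every relation of \<open>a\<close> is a multiple of \<open>H\<close> up to a
  power of its leading coefficient, so it is inherited by \<open>b(k := y')\<close> once \<open>y'\<close> is a root of
  the specialized \<open>H\<close> and the leading coefficient does not vanish at \<open>b\<close>.\<close>

lemma specializes_Suc_if_minimal_relation_poly:
  fixes a b :: "nat \<Rightarrow> 'a::idom"
  assumes H: "minimal_relation_poly k a H" and "specializes k a b"
    and lead: "lead_coeff H b \<noteq> 0" and root: "poly (eval_coeffs b H) y = 0"
  shows "specializes (Suc k) a (b(k := y))"
  unfolding specializes_def
proof (intro ballI impI)
  fix e
  assume "e \<in> int_poly_fun (Suc k)" "e a = 0"
  then obtain P where P: "\<forall>j. coeff P j \<in> int_poly_fun k" "poly (eval_coeffs a P) (a k) = 0"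
    and e: "\<And>b y. e (b(k := y)) = poly (eval_coeffs b P) y"
    by (metis int_poly_fun_Suc_at_upd)
  have H_fun: "\<forall>j. coeff H j \<in> int_poly_fun k" and "H \<noteq> 0"
    using H by (auto simp: minimal_relation_poly_def relation_poly_def)
  obtain N Q R where div: "smult (lead_coeff H ^ N) P = H * Q + R"
    and R: "R = 0 \<or> degree R < degree H" "\<forall>j. coeff R j \<in> int_poly_fun k"
    by (rule pseudo_divmod_in[OF int_poly_fun_0 int_poly_fun_diff int_poly_fun_mult \<open>H \<noteq> 0\<close> P(1) H_fun])
  have eval_div: "lead_coeff H x ^ N * poly (eval_coeffs x P) t =
      poly (eval_coeffs x H) t * poly (eval_coeffs x Q) t + poly (eval_coeffs x R) t" for x t
    using arg_cong[OF div, of "\<lambda>F. poly (eval_coeffs x F) t"] by (simp add: power_fun_apply)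
  have "poly (eval_coeffs a R) (a k) = 0"
    using eval_div[of a "a k"] P(2) H by (simp add: minimal_relation_poly_def relation_poly_def)
  then have "eval_coeffs a R = 0"
    by (rule eval_coeffs_eq_0_below_minimal_relation_poly[OF H R(2) R(1)])
  then have "eval_coeffs b R = 0"
    using \<open>specializes k a b\<close> R(2) by (simp add: specializes_def eval_coeffs_eq_0_iff)
  then have "lead_coeff H b ^ N * poly (eval_coeffs b P) y = 0"
    using eval_div[of b y] root by simp
  then show "e (b(k := y)) = 0"
    using lead by (simp add: e)
qed

lemma partial_hom_on_if_specializes:
  fixes a b :: "nat \<Rightarrow> 'a::field"
  assumes inj: "inj_on a {..<m}" and spec: "specializes m a b"
  shows "partial_hom_on (a ` {..<m}) (\<lambda>x. b (inv_into {..<m} a x))"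
proof -
  define f where "f x = b (inv_into {..<m} a x)" for x
  have f_a: "f (a i) = b i" if "i < m" for i
    using inj that by (simp add: f_def)
  have rel: "c b = 0" if "c \<in> int_poly_fun m" "c a = 0" for c
    using spec that by (simp add: specializes_def)
  have var: "(\<lambda>x. x i) \<in> int_poly_fun m" if "i < m" for i
    using that by (rule int_poly_fun_var)
  show ?thesis
    unfolding partial_hom_on_def f_def[symmetric]
  proof (intro conjI impI ballI)
    assume "1 \<in> a ` {..<m}"
    then obtain i where "i < m" "a i = 1"
      by auto
    then have "((\<lambda>x. x i) - 1) b = 0"
      by (intro rel[OF int_poly_fun_diff[OF var int_poly_fun_1]]) simp_all
    then show "f 1 = 1"
      using f_a \<open>i < m\<close> \<open>a i = 1\<close> by force
  next
    fix x y
    assume "x \<in> a ` {..<m}" "y \<in> a ` {..<m}" "x + y \<in> a ` {..<m}"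
    then obtain i j l where "i < m" "j < m" "l < m" "a i = x" "a j = y" "a l = x + y"
      by (metis imageE lessThan_iff)
    then have "((\<lambda>x. x i) + (\<lambda>x. x j) - (\<lambda>x. x l)) b = 0"
      by (intro rel[OF int_poly_fun_diff[OF int_poly_fun_add[OF var var] var]]) simp_all
    then show "f (x + y) = f x + f y"
      using f_a \<open>i < m\<close> \<open>j < m\<close> \<open>l < m\<close> \<open>a i = x\<close> \<open>a j = y\<close> \<open>a l = x + y\<close> by force
  next
    fix x y
    assume "x \<in> a ` {..<m}" "y \<in> a ` {..<m}" "x * y \<in> a ` {..<m}"
    then obtain i j l where "i < m" "j < m" "l < m" "a i = x" "a j = y" "a l = x * y"
      by (metis imageE lessThan_iff)
    then have "((\<lambda>x. x i) * (\<lambda>x. x j) - (\<lambda>x. x l)) b = 0"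
      by (intro rel[OF int_poly_fun_diff[OF int_poly_fun_mult[OF var var] var]]) simp_all
    then show "f (x * y) = f x * f y"
      using f_a \<open>i < m\<close> \<open>j < m\<close> \<open>l < m\<close> \<open>a i = x\<close> \<open>a j = y\<close> \<open>a l = x * y\<close> by force
  qed
qed

section \<open>Transcendental numbers have no adequate set\<close>

context padic_field
begin

definition close_specializations :: "nat \<Rightarrow> (nat \<Rightarrow> 'a) \<Rightarrow> bool" where
  "close_specializations k a \<longleftrightarrow>
     (\<forall>\<epsilon>>0. \<exists>b. b 0 \<noteq> a 0 \<and> (\<forall>i<k. av (b i - a i) < \<epsilon>) \<and> specializes k a b)"

lemma close_specializations_1:
  assumes "\<not> algebraic (a 0)"
  shows "close_specializations 1 a"
  unfolding close_specializations_def
proof (intro allI impI)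
  fix \<epsilon> :: real
  assume "\<epsilon> > 0"
  then obtain N where N: "(1 / real p) ^ N < \<epsilon>"
    using real_arch_pow_inv[of \<epsilon> "1 / real p"] p_gt_1 by auto
  define b where "b = a(0 := a 0 + of_nat p ^ N)"
  have "b 0 \<noteq> a 0" "\<forall>i<1. av (b i - a i) < \<epsilon>"
    using p_gt_1 N by (simp_all add: b_def av_power av_of_nat_p)
  with specializes_1_if_transcendental[of a, OF assms]
  show "\<exists>b. b 0 \<noteq> a 0 \<and> (\<forall>i<1. av (b i - a i) < \<epsilon>) \<and> specializes 1 a b"
    by blast
qed

lemma close_specializations_Suc_if_no_relation_poly:
  assumes "k \<ge> 1" "close_specializations k a" "\<nexists>P. relation_poly k a P"
  shows "close_specializations (Suc k) a"
  unfolding close_specializations_def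
proof (intro allI impI)
  fix \<epsilon> :: real
  assume "\<epsilon> > 0"
  then obtain b where "b 0 \<noteq> a 0" "\<forall>i<k. av (b i - a i) < \<epsilon>" "specializes k a b"
    using assms(2) unfolding close_specializations_def by blast
  show "\<exists>b. b 0 \<noteq> a 0 \<and> (\<forall>i<Suc k. av (b i - a i) < \<epsilon>) \<and> specializes (Suc k) a b"
  proof (intro exI conjI)
    show "(b(k := a k)) 0 \<noteq> a 0"
      using \<open>k \<ge> 1\<close> \<open>b 0 \<noteq> a 0\<close> by simp
    show "\<forall>i<Suc k. av ((b(k := a k)) i - a i) < \<epsilon>"
      using \<open>\<forall>i<k. av (b i - a i) < \<epsilon>\<close> \<open>\<epsilon> > 0\<close> by (simp add: less_Suc_eq)
    show "specializes (Suc k) a (b(k := a k))"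
      using assms(3) \<open>specializes k a b\<close> by (rule specializes_Suc_if_no_relation_poly)
  qed
qed

lemma close_specializations_Suc_if_minimal_relation_poly:
  assumes "k \<ge> 1" "close_specializations k a" and H: "minimal_relation_poly k a H"
  shows "close_specializations (Suc k) a"
  unfolding close_specializations_def
proof (intro allI impI)
  fix \<epsilon> :: real
  assume "\<epsilon> > 0"
  have "\<forall>j. coeff H j \<in> int_poly_fun k" "lead_coeff H a \<noteq> 0" "poly (eval_coeffs a H) (a k) = 0"
    using H leading_coeff_neq_0[of "eval_coeffs a H"]
    by (auto simp: minimal_relation_poly_def relation_poly_def)
  then obtain \<eta> where "\<eta> > 0" and \<eta>: "\<And>b. \<forall>i<k. av (b i - a i) < \<eta> \<Longrightarrow>
      lead_coeff H b \<noteq> 0 \<and> (\<exists>y. poly (eval_coeffs b H) y = 0 \<and> av (y - a k) < \<epsilon>)"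
    using simple_root_persists_under_specialization minimal_relation_poly_simple_root[OF H]
      \<open>\<epsilon> > 0\<close> by metis
  have "min \<epsilon> \<eta> > 0"
    using \<open>\<epsilon> > 0\<close> \<open>\<eta> > 0\<close> by simp
  then obtain b where "b 0 \<noteq> a 0" and b_close: "\<forall>i<k. av (b i - a i) < min \<epsilon> \<eta>"
    and "specializes k a b"
    using assms(2) unfolding close_specializations_def by blast
  then obtain y where "lead_coeff H b \<noteq> 0" "poly (eval_coeffs b H) y = 0" "av (y - a k) < \<epsilon>"
    using \<eta> by force
  show "\<exists>b. b 0 \<noteq> a 0 \<and> (\<forall>i<Suc k. av (b i - a i) < \<epsilon>) \<and> specializes (Suc k) a b"
  proof (intro exI conjI)
    show "(b(k := y)) 0 \<noteq> a 0"
      using \<open>k \<ge> 1\<close> \<open>b 0 \<noteq> a 0\<close> by simp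
    show "\<forall>i<Suc k. av ((b(k := y)) i - a i) < \<epsilon>"
      using b_close \<open>av (y - a k) < \<epsilon>\<close> by (simp add: less_Suc_eq)
    show "specializes (Suc k) a (b(k := y))"
      using \<open>lead_coeff H b \<noteq> 0\<close> \<open>poly (eval_coeffs b H) y = 0\<close>
      by (rule specializes_Suc_if_minimal_relation_poly[OF H \<open>specializes k a b\<close>])
  qed
qed

lemma close_specializations_Suc:
  assumes "k \<ge> 1" "close_specializations k a"
  shows "close_specializations (Suc k) a"
proof (cases "\<exists>P. relation_poly k a P")
  case True
  then obtain P where "relation_poly k a P"
    by blast
  then obtain H where "minimal_relation_poly k a H"
    by (rule ex_minimal_relation_poly)
  with assms show ?thesis
    by (rule close_specializations_Suc_if_minimal_relation_poly)
next
  case False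
  with assms show ?thesis
    by (rule close_specializations_Suc_if_no_relation_poly)
qed

lemma close_specializations_if_transcendental:
  assumes "\<not> algebraic (a 0)" "k \<ge> 1"
  shows "close_specializations k a"
  using assms(2)
proof (induction k rule: dec_induct)
  case base
  then show ?case
    using close_specializations_1[of a, OF assms(1)] .
next
  case (step k)
  then show ?case
    using close_specializations_Suc by blast
qed

lemma tilde_imp_algebraic:
  fixes r :: 'a
  assumes "r \<in> tilde"
  shows "algebraic r"
proof (rule ccontr)
  assume "\<not> algebraic r"
  obtain A where "finite A" "r \<in> A" and fixes_r: "\<And>f. partial_hom_on A f \<Longrightarrow> f r = r"
    using assms by (auto simp: tilde_iff_partial_hom_on)
  obtain xs where xs: "distinct xs" "set xs = A - {r}"
    using finite_distinct_list[of "A - {r}"] \<open>finite A\<close> by blast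
  define m where "m = length (r # xs)"
  define a where "a = nth (r # xs)"
  have "distinct (r # xs)"
    using xs by simp
  then have inj: "inj_on a {..<m}"
    unfolding a_def m_def by (rule inj_on_nth) simp
  have "a ` {..<m} = set (r # xs)"
    by (simp add: a_def m_def lessThan_atLeast0 nth_image del: list.set)
  also have "\<dots> = A"
    using xs \<open>r \<in> A\<close> by auto
  finally have A: "a ` {..<m} = A" .
  have "close_specializations m a"
    using \<open>\<not> algebraic r\<close> by (intro close_specializations_if_transcendental) (simp_all add: a_def m_def)
  then obtain b where "b 0 \<noteq> a 0" "specializes m a b"
    unfolding close_specializations_def using zero_less_one by blast
  then have "b 0 \<noteq> r"
    by (simp add: a_def)
  have "partial_hom_on A (\<lambda>x. b (inv_into {..<m} a x))"
    using partial_hom_on_if_specializes[OF inj \<open>specializes m a b\<close>] A by simp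
  moreover have "inv_into {..<m} a r = 0"
    using inv_into_f_f[OF inj, of 0] by (simp add: a_def m_def)
  ultimately show False
    using fixes_r \<open>b 0 \<noteq> r\<close> by force
qed

end

theorem theorem7:
  fixes p :: nat and av :: "'a::field_char_0 \<Rightarrow> real"
  assumes "prime p" and "is_Qp p av"
  shows "(tilde :: 'a set) = {x. algebraic x}"
proof -
  interpret padic_field p av
    using assms by unfold_locales
  show ?thesis
    using tilde_imp_algebraic algebraic_in_tilde by blast
qed

end
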